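(* Let $m>0$ and $\bar b>0$. For real $\lambda$ and a real symmetric matrix $\widehat{\bar P}=\begin{pmatrix}\bar p_{11}&\bar p_{12}\\ \bar p_{12}&\bar p_{22}\end{pmatrix}$ define the symmetric $3\times3$ matrix $\widehat{\bar T}(\lambda,\widehat{\bar P})$ with entries $$\bar t_{11}=(\lambda-2\bar b\sqrt m)\bar p_{11}+2\sqrt m\,\bar p_{12},\quad \bar t_{12}=-\bar b\sqrt m\,\bar p_{12}+\sqrt m\,\bar p_{22}+\lambda\bar p_{12},\quad \bar t_{13}=-\bar p_{11}/\sqrt m+\sqrt m/2,$$ $$\bar t_{22}=\lambda\bar p_{22}-\tfrac m2\lambda,\quad \bar t_{23}=-\bar p_{12}/\sqrt m+\lambda/2,\quad \bar t_{33}=0.$$ Let $\bar r^\star$ be the unique real number with $\bar r^\star\bar b^2-2(\bar r^{\star2}+1)\bar b+\bar r^{\star3}+3\bar r^\star=0$, and $\lambda^\star=\sqrt m\,\bar r^\star$. Then $\lambda^\star$ equals the maximum of $\lambda$ over all pairs $(\lambda,\widehat{\bar P})$ satisfying $\widehat{\bar T}(\lambda,\widehat{\bar P})\preceq0$ and $\widehat{\bar P}\succeq0$; it is attained at $\widehat{\bar P}=\frac m2\begin{pmatrix}1&\bar r^\star\\ \bar r^\star&\bar r^{\star2}\end{pmatrix}$.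
   Context: The matrix $\widehat{\bar T}$ is the Lyapunov linear matrix inequality matrix (with no smoothness multiplier) for the first-order system $\dot v=-\bar b\sqrt m v-\nabla f(x)/\sqrt m$, $\dot x=\sqrt m v$, equivalent to $\ddot x+\bar b\sqrt m\dot x+\nabla f(x)=0$. $\preceq0$/$\succeq0$ denote negative/positive semidefiniteness. *)

theory Defs
  imports "HOL-Analysis.Analysis"
begin

text \<open>Positive / negative semidefiniteness of a (real, square) matrix via its quadratic form.
 All matrices used below are symmetric by construction.\<close>
definition psd :: "real^'n^'n \<Rightarrow> bool" where
  "psd A \<longleftrightarrow> (\<forall>x. 0 \<le> x \<bullet> (A *v x))"

definition nsd :: "real^'n^'n \<Rightarrow> bool" where
  "nsd A \<longleftrightarrow> (\<forall>x. x \<bullet> (A *v x) \<le> 0)"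

definition Pmat :: "real \<Rightarrow> real \<Rightarrow> real \<Rightarrow> real^2^2" where
  "Pmat p11 p12 p22 = vector [vector [p11, p12], vector [p12, p22]]"

definition Tmat :: "real \<Rightarrow> real \<Rightarrow> real \<Rightarrow> real \<Rightarrow> real \<Rightarrow> real \<Rightarrow> real^3^3" where
  "Tmat m b lam p11 p12 p22 =
    (let t11 = (lam - 2 * b * sqrt m) * p11 + 2 * sqrt m * p12;
         t12 = - b * sqrt m * p12 + sqrt m * p22 + lam * p12;
         t13 = - p11 / sqrt m + sqrt m / 2;
         t22 = lam * p22 - (m / 2) * lam;
         t23 = - p12 / sqrt m + lam / 2;
         t33 = 0
     in vector [vector [t11, t12, t13], vector [t12, t22, t23], vector [t13, t23, t33]])"

end

theory Submission imports Defs begin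

text \<open>Since \<open>t\<^sub>3\<^sub>3 = 0\<close>, \<open>T \<preceq> 0\<close> forces \<open>t\<^sub>1\<^sub>3 = t\<^sub>2\<^sub>3 = 0\<close>, which fixes
  \<open>p\<^sub>1\<^sub>1 = m/2\<close> and \<open>p\<^sub>1\<^sub>2 = \<surd>m \<lambda>/2\<close>. Writing \<open>\<lambda> = \<surd>m \<rho>\<close> and \<open>p\<^sub>2\<^sub>2 = m q/2\<close>, the LMI
  becomes a \<open>2\<times>2\<close> condition on \<open>(\<rho>, q)\<close>, and \<open>P \<succeq> 0\<close> becomes \<open>\<rho>\<^sup>2 \<le> q\<close>. An algebraic
  identity combines the determinant condition with \<open>q \<ge> \<rho>\<^sup>2\<close> into \<open>\<rho> g(\<rho>) \<le> 0\<close> for the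
  cubic \<open>g\<close> of the statement; as \<open>g\<close> is strictly increasing on \<open>[0,1]\<close> and feasible
  \<open>\<rho> > 0\<close> satisfy \<open>\<rho> \<le> 1\<close>, this gives \<open>\<rho> \<le> r\<^sup>\<star>\<close>, with equality at \<open>q = \<rho>\<^sup>2\<close>.\<close>

lemma affine_nonpos_imp_slope_zero:
  fixes a c :: real
  assumes "\<And>z. a + c * z \<le> 0"
  shows "c = 0"
proof (rule ccontr)
  assume "c \<noteq> 0"
  then have "a + c * ((1 - a) / c) = 1" by simp
  with assms[of "(1 - a) / c"] show False by simp
qed

lemma binary_form_nonpos_iff:
  fixes a c d :: real
  shows "(\<forall>x y. a * x^2 + 2 * c * x * y + d * y^2 \<le> 0) \<longleftrightarrow> a \<le> 0 \<and> d \<le> 0 \<and> c^2 \<le> a * d"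
proof
  assume form: "\<forall>x y. a * x^2 + 2 * c * x * y + d * y^2 \<le> 0"
  have a: "a \<le> 0" and d: "d \<le> 0"
    using form[rule_format, of 1 0] form[rule_format, of 0 1] by simp_all
  have "c^2 \<le> a * d"
  proof (cases "a = 0")
    case True
    have "d + 2 * c * z \<le> 0" for z
      using form[rule_format, of z 1] True by (simp add: algebra_simps)
    then have "2 * c = 0" by (rule affine_nonpos_imp_slope_zero)
    with True show ?thesis by simp
  next
    case False
    have "a * (a * d - c^2) = a * c^2 + 2 * c * c * (- a) + d * (- a)^2"
      by (simp add: power2_eq_square algebra_simps)
    also have "\<dots> \<le> 0" using form by blast
    finally show ?thesis using a False by (simp add: mult_le_0_iff)
  qed
  with a d show "a \<le> 0 \<and> d \<le> 0 \<and> c^2 \<le> a * d" by simp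
next
  assume coeffs: "a \<le> 0 \<and> d \<le> 0 \<and> c^2 \<le> a * d"
  show "\<forall>x y. a * x^2 + 2 * c * x * y + d * y^2 \<le> 0"
  proof (intro allI)
    fix x y :: real
    show "a * x^2 + 2 * c * x * y + d * y^2 \<le> 0"
    proof (cases "a = 0")
      case True
      with coeffs show ?thesis by (simp add: mult_nonpos_nonneg)
    next
      case False
      have "a * (a * x^2 + 2 * c * x * y + d * y^2) = (a * x + c * y)^2 + (a * d - c^2) * y^2"
        by (simp add: power2_eq_square algebra_simps)
      also have "\<dots> \<ge> 0" using coeffs by simp
      finally show ?thesis using coeffs False by (simp add: zero_le_mult_iff)
    qed
  qed
qed

lemma ternary_form_nonpos_iff:
  fixes a c d e f :: real
  shows "(\<forall>x y z. a * x^2 + 2 * c * x * y + 2 * e * x * z + d * y^2 + 2 * f * y * z \<le> 0)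
     \<longleftrightarrow> e = 0 \<and> f = 0 \<and> a \<le> 0 \<and> d \<le> 0 \<and> c^2 \<le> a * d"
proof
  assume form: "\<forall>x y z. a * x^2 + 2 * c * x * y + 2 * e * x * z + d * y^2 + 2 * f * y * z \<le> 0"
  have "a + 2 * e * z \<le> 0" for z
    using form[rule_format, of 1 0 z] by simp
  then have "2 * e = 0" by (rule affine_nonpos_imp_slope_zero)
  moreover have "d + 2 * f * z \<le> 0" for z
    using form[rule_format, of 0 1 z] by simp
  then have "2 * f = 0" by (rule affine_nonpos_imp_slope_zero)
  moreover have "\<forall>x y. a * x^2 + 2 * c * x * y + d * y^2 \<le> 0"
    using form[rule_format, of _ _ 0] by simp
  ultimately show "e = 0 \<and> f = 0 \<and> a \<le> 0 \<and> d \<le> 0 \<and> c^2 \<le> a * d"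
    by (simp add: binary_form_nonpos_iff)
qed (use binary_form_nonpos_iff in auto)

lemma psd_Pmat_iff: "psd (Pmat p11 p12 p22) \<longleftrightarrow> 0 \<le> p11 \<and> 0 \<le> p22 \<and> p12^2 \<le> p11 * p22"
proof -
  have "psd (Pmat p11 p12 p22) \<longleftrightarrow> (\<forall>x y. 0 \<le> p11 * x^2 + 2 * p12 * x * y + p22 * y^2)"
    unfolding psd_def forall_vector_2 Pmat_def
    by (simp add: inner_vec_def matrix_vector_mult_def sum_2 power2_eq_square algebra_simps)
  also have "\<dots> \<longleftrightarrow> (\<forall>x y. (- p11) * x^2 + 2 * (- p12) * x * y + (- p22) * y^2 \<le> 0)"
    by (intro iff_allI) linarith
  finally show ?thesis
    unfolding binary_form_nonpos_iff by simp
qed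

lemma nsd_Tmat_iff:
  "nsd (Tmat m b lam p11 p12 p22) \<longleftrightarrow>
    (let t11 = (lam - 2 * b * sqrt m) * p11 + 2 * sqrt m * p12;
         t12 = - b * sqrt m * p12 + sqrt m * p22 + lam * p12;
         t13 = - p11 / sqrt m + sqrt m / 2;
         t22 = lam * p22 - (m / 2) * lam;
         t23 = - p12 / sqrt m + lam / 2
     in t13 = 0 \<and> t23 = 0 \<and> t11 \<le> 0 \<and> t22 \<le> 0 \<and> t12^2 \<le> t11 * t22)"
  unfolding nsd_def forall_vector_3 Tmat_def Let_def ternary_form_nonpos_iff[symmetric]
  by (simp add: inner_vec_def matrix_vector_mult_def sum_3 power2_eq_square algebra_simps)

text \<open>Once \<open>p\<^sub>1\<^sub>1, p\<^sub>1\<^sub>2\<close> are fixed, every entry of the remaining \<open>2\<times>2\<close> block carries the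
  common positive factor \<open>m\<^sup>3\<^sup>/\<^sup>2 / 2\<close>, which is divided out.\<close>
lemma nsd_Tmat_scaled_iff:
  assumes "m > 0"
  shows "nsd (Tmat m b (sqrt m * \<rho>) p11 p12 (m / 2 * q)) \<longleftrightarrow>
    p11 = m / 2 \<and> p12 = m / 2 * \<rho> \<and> 3 * \<rho> - 2 * b \<le> 0 \<and> \<rho> * (q - 1) \<le> 0
    \<and> (\<rho>^2 - b * \<rho> + q)^2 \<le> (3 * \<rho> - 2 * b) * (\<rho> * (q - 1))"
proof -
  define s where "s = sqrt m"
  define k where "k = s^3 / 2"
  have s: "s > 0" "m = s^2" using assms by (simp_all add: s_def)
  then have k: "k > 0" by (simp add: k_def)
  have p11: "- p11 / s + s / 2 = 0 \<longleftrightarrow> p11 = m / 2"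
    using s by (auto simp: field_simps power2_eq_square)
  have p12: "- p12 / s + s * \<rho> / 2 = 0 \<longleftrightarrow> p12 = m / 2 * \<rho>"
    using s by (auto simp: field_simps power2_eq_square)
  have block: "((s * \<rho> - 2 * b * s) * p11 + 2 * s * p12 \<le> 0
      \<and> s * \<rho> * (m / 2 * q) - m / 2 * (s * \<rho>) \<le> 0
      \<and> (- b * s * p12 + s * (m / 2 * q) + s * \<rho> * p12)^2
          \<le> ((s * \<rho> - 2 * b * s) * p11 + 2 * s * p12) * (s * \<rho> * (m / 2 * q) - m / 2 * (s * \<rho>)))
    \<longleftrightarrow> 3 * \<rho> - 2 * b \<le> 0 \<and> \<rho> * (q - 1) \<le> 0
      \<and> (\<rho>^2 - b * \<rho> + q)^2 \<le> (3 * \<rho> - 2 * b) * (\<rho> * (q - 1))"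
    if "p11 = m / 2" "p12 = m / 2 * \<rho>"
  proof -
    have "(s * \<rho> - 2 * b * s) * p11 + 2 * s * p12 = k * (3 * \<rho> - 2 * b)"
      and "s * \<rho> * (m / 2 * q) - m / 2 * (s * \<rho>) = k * (\<rho> * (q - 1))"
      and "- b * s * p12 + s * (m / 2 * q) + s * \<rho> * p12 = k * (\<rho>^2 - b * \<rho> + q)"
      unfolding that s(2) by (simp_all add: k_def power2_eq_square power3_eq_cube algebra_simps)
    moreover have "(k * C)^2 \<le> (k * A) * (k * B) \<longleftrightarrow> C^2 \<le> A * B" for A B C
    proof -
      have "(k * C)^2 \<le> (k * A) * (k * B) \<longleftrightarrow> k^2 * C^2 \<le> k^2 * (A * B)"
        by (simp add: power2_eq_square algebra_simps)
      also have "\<dots> \<longleftrightarrow> C^2 \<le> A * B"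
        using k by (simp add: mult_le_cancel_left_pos)
      finally show ?thesis .
    qed
    ultimately show ?thesis
      using k by (simp add: mult_le_0_iff)
  qed
  show ?thesis
    unfolding nsd_Tmat_iff Let_def s_def[symmetric] using p11 p12 block by auto
qed

definition char_cubic :: "real \<Rightarrow> real \<Rightarrow> real" where
  "char_cubic b r = r * b^2 - 2 * (r^2 + 1) * b + r^3 + 3 * r"

text \<open>The Schur-complement residual of the scaled LMI plus a multiple of the \<open>P \<succeq> 0\<close> slack.\<close>
lemma neg_mult_char_cubic_eq:
  "- \<rho> * char_cubic b \<rho>
     = ((3 * \<rho> - 2 * b) * (\<rho> * (q - 1)) - (\<rho>^2 - b * \<rho> + q)^2) + (q - \<rho>^2) * q"
  by (simp add: char_cubic_def power2_eq_square power3_eq_cube algebra_simps)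

lemma char_cubic_root_bounds:
  assumes "b > 0" and "char_cubic b r = 0"
  shows "0 < r" and "r \<le> 1"
proof -
  have "char_cubic b r = r * (r - b)^2 + 3 * r - 2 * b"
    by (simp add: char_cubic_def power2_eq_square power3_eq_cube algebra_simps)
  then show pos: "0 < r"
    using assms by (smt (verit) mult_nonpos_nonneg zero_le_power2)
  have "r * char_cubic b r = (r * b - (r^2 + 1))^2 + r^2 - 1"
    by (simp add: char_cubic_def power2_eq_square power3_eq_cube algebra_simps)
  then have "(r * b - (r^2 + 1))^2 + r^2 - 1 = 0"
    using assms(2) by simp
  then have "r^2 \<le> 1"
    by (smt (verit) zero_le_power2)
  then show "r \<le> 1"
    using pos by (simp add: power_le_one_iff abs_le_iff)
qed

lemma char_cubic_strict_mono:
  assumes "0 \<le> r" and "r < p" and "p \<le> 1"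
  shows "char_cubic b r < char_cubic b p"
proof -
  have "char_cubic b p - char_cubic b r = (p - r) * ((b - p - r)^2 + 3 - p * r)"
    by (simp add: char_cubic_def power2_eq_square power3_eq_cube algebra_simps)
  moreover have "p * r \<le> 1"
    using assms by (simp add: mult_le_one)
  then have "(b - p - r)^2 + 3 - p * r > 0"
    by (smt (verit) zero_le_power2)
  ultimately show ?thesis
    using assms(2) by (smt (verit) mult_pos_pos)
qed

lemma char_cubic_unique_root:
  assumes "b > 0"
  shows "\<exists>!r. char_cubic b r = 0"
proof (rule ex_ex1I)
  have "char_cubic b 0 \<le> 0" and "char_cubic b 1 = (b - 2)^2"
    using assms by (simp_all add: char_cubic_def power2_eq_square algebra_simps)
  moreover have "\<forall>x. 0 \<le> x \<and> x \<le> 1 \<longrightarrow> isCont (char_cubic b) x"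
    unfolding char_cubic_def by (auto intro!: continuous_intros)
  ultimately show "\<exists>r. char_cubic b r = 0"
    using IVT[of "char_cubic b" 0 0 1] by auto
next
  fix r p assume r: "char_cubic b r = 0" and p: "char_cubic b p = 0"
  note bounds = char_cubic_root_bounds[OF assms r] char_cubic_root_bounds[OF assms p]
  show "r = p"
  proof (cases r p rule: linorder_cases)
    case less
    then show ?thesis using char_cubic_strict_mono[of r p b] bounds r p by simp
  next
    case greater
    then show ?thesis using char_cubic_strict_mono[of p r b] bounds r p by simp
  qed
qed

lemma lmi_feasible_at_root:
  assumes "m > 0" and "b > 0" and root: "char_cubic b r = 0"
  shows "nsd (Tmat m b (sqrt m * r) (m / 2) (m / 2 * r) (m / 2 * r^2))"
    and "psd (Pmat (m / 2) (m / 2 * r) (m / 2 * r^2))"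
proof -
  have r: "0 < r" "r \<le> 1" using char_cubic_root_bounds[OF assms(2) root] by auto
  have "3 * r - 2 * b = - r * (r - b)^2"
    using root by (simp add: char_cubic_def power2_eq_square power3_eq_cube algebra_simps)
  then have "3 * r - 2 * b \<le> 0" using r by simp
  moreover have "r * (r^2 - 1) \<le> 0"
    using r by (simp add: mult_nonneg_nonpos power_le_one)
  moreover have "(r^2 - b * r + r^2)^2 = (3 * r - 2 * b) * (r * (r^2 - 1))"
    using neg_mult_char_cubic_eq[of r b "r^2"] root by simp
  ultimately show "nsd (Tmat m b (sqrt m * r) (m / 2) (m / 2 * r) (m / 2 * r^2))"
    using nsd_Tmat_scaled_iff[OF assms(1)] by simp
  show "psd (Pmat (m / 2) (m / 2 * r) (m / 2 * r^2))"
    using assms(1) unfolding psd_Pmat_iff by (simp add: power2_eq_square)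
qed

lemma lmi_rate_le_root:
  assumes "m > 0" and "b > 0" and root: "char_cubic b r = 0"
    and T: "nsd (Tmat m b lam p11 p12 p22)" and P: "psd (Pmat p11 p12 p22)"
  shows "lam \<le> sqrt m * r"
proof -
  define \<rho> where "\<rho> = lam / sqrt m"
  define q where "q = 2 * p22 / m"
  have lam: "lam = sqrt m * \<rho>" and p22: "p22 = m / 2 * q"
    using assms(1) by (simp_all add: \<rho>_def q_def)
  have r: "0 < r" "r \<le> 1" using char_cubic_root_bounds[OF assms(2) root] by auto
  show ?thesis
  proof (cases "\<rho> \<le> 0")
    case True
    then have "lam \<le> 0" unfolding lam by (intro mult_nonneg_nonpos) (use assms(1) in auto)
    also have "0 < sqrt m * r" using assms(1) r by simp
    finally show ?thesis by simp
  next
    case False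
    from T have T': "p11 = m / 2" "p12 = m / 2 * \<rho>" "\<rho> * (q - 1) \<le> 0"
      "(\<rho>^2 - b * \<rho> + q)^2 \<le> (3 * \<rho> - 2 * b) * (\<rho> * (q - 1))"
      unfolding lam p22 nsd_Tmat_scaled_iff[OF assms(1)] by auto
    from P have "\<rho>^2 \<le> q"
      unfolding psd_Pmat_iff T' p22 using assms(1) by (simp add: power2_eq_square field_simps)
    moreover have "q \<le> 1" using T'(3) False by (simp add: mult_le_0_iff)
    ultimately have "\<rho>^2 \<le> 1" by linarith
    then have "\<rho> \<le> 1" using False by (simp add: power_le_one_iff abs_le_iff)
    have "0 \<le> q" using \<open>\<rho>^2 \<le> q\<close> zero_le_power2[of \<rho>] by linarith
    then have "(q - \<rho>^2) * q \<ge> 0" using \<open>\<rho>^2 \<le> q\<close> by simp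
    then have "- \<rho> * char_cubic b \<rho> \<ge> 0" using neg_mult_char_cubic_eq[of \<rho> b q] T'(4) by linarith
    then have "char_cubic b \<rho> \<le> 0" using False by (simp add: mult_le_0_iff)
    have "\<rho> \<le> r"
    proof (rule ccontr)
      assume "\<not> \<rho> \<le> r"
      then have "char_cubic b r < char_cubic b \<rho>"
        using char_cubic_strict_mono[of r \<rho> b] r \<open>\<rho> \<le> 1\<close> by simp
      with root \<open>char_cubic b \<rho> \<le> 0\<close> show False by simp
    qed
    then show ?thesis unfolding lam using assms(1) by (simp add: mult_left_mono)
  qed
qed

theorem theorem6:
  fixes m b :: real
  assumes "m > 0" and "b > 0"
  shows "(\<exists>!r::real. r * b^2 - 2 * (r^2 + 1) * b + r^3 + 3 * r = 0)
       \<and> (\<forall>r::real. r * b^2 - 2 * (r^2 + 1) * b + r^3 + 3 * r = 0 \<longrightarrow>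
           nsd (Tmat m b (sqrt m * r) (m/2) (m/2 * r) (m/2 * r^2))
         \<and> psd (Pmat (m/2) (m/2 * r) (m/2 * r^2))
         \<and> (\<forall>lam p11 p12 p22. nsd (Tmat m b lam p11 p12 p22) \<and> psd (Pmat p11 p12 p22)
                \<longrightarrow> lam \<le> sqrt m * r))"
  using char_cubic_unique_root[OF assms(2)] lmi_feasible_at_root[OF assms] lmi_rate_le_root[OF assms]
  unfolding char_cubic_def by blast

end
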